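(* Let $a_n=a_n(123,\{1\},\{1,3\})$. Then $a_1=1$, $a_2=2$, and for $n>2$, $a_n=(n-1)a_{n-1}+(n-2)a_{n-2}$. Moreover, for all $n\ge1$, \[a_n=(n-1)!+\sum_{k=0}^{n-2}(-1)^{n-k}(k+1)!\binom{n-1}{k}=\frac{c_{n+1}}{n}=c_n+c_{n-1},\] where $c_m$ is the number of non-derangements of $[m]$ (permutations of $[m]$ with at least one fixed point), $c_m=m!\big(1-\sum_{k=0}^{m}\frac{(-1)^k}{k!}\big)$, with $c_0=0$.
   Context: For $n\ge1$, $\mathcal S_n$ is the set of permutations $\pi=\pi_1\cdots\pi_n$ of $[n]$. A bi-vincular pattern of length $k$ is a triple $p=(\sigma,X,Y)$ with $\sigma\in\mathcal S_k$ and $X,Y\subseteq\{0,1,\dots,k\}$. A permutation $\pi\in\mathcal S_n$ contains $p$ if there are indices $1\le i_1<\dots<i_k\le n$ such that $(\pi_{i_1},\dots,\pi_{i_k})$ is order-isomorphic to $\sigma$ and, letting $j_1<\dots<j_k$ be the values $\pi_{i_1},\dots,\pi_{i_k}$ sorted increasingly and setting $i_0=j_0=0$, $i_{k+1}=j_{k+1}=n+1$, one has $i_{x+1}=i_x+1$ for all $x\in X$ and $j_{y+1}=j_y+1$ for all $y\in Y$. Otherwise $\pi$ avoids $p$; $a_n(p)$ is the number of $\pi\in\mathcal S_n$ avoiding $p$. *)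

theory Defs
  imports Complex_Main "HOL-Combinatorics.Permutations"
begin

text \<open>A permutation pi of [n] is a function nat => nat with pi permutes {1..n};
  its one-line notation is pi 1, ..., pi n. A pattern sigma in S_k is likewise
  a function with sigma permutes {1..k}.\<close>

definition bv_contains ::
  "nat \<Rightarrow> (nat \<Rightarrow> nat) \<Rightarrow> nat \<Rightarrow> (nat \<Rightarrow> nat) \<Rightarrow> nat set \<Rightarrow> nat set \<Rightarrow> bool" where
  "bv_contains n \<pi> k \<sigma> X Y \<longleftrightarrow>
     (\<exists>idx :: nat \<Rightarrow> nat.
        (\<forall>a\<in>{1..k}. 1 \<le> idx a \<and> idx a \<le> n) \<and>
        (\<forall>a\<in>{1..k}. \<forall>b\<in>{1..k}. a < b \<longrightarrow> idx a < idx b) \<and>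
        (\<forall>a\<in>{1..k}. \<forall>b\<in>{1..k}. \<pi> (idx a) < \<pi> (idx b) \<longleftrightarrow> \<sigma> a < \<sigma> b) \<and>
        (let ie = (\<lambda>t. if t = 0 then 0 else if t = k + 1 then n + 1 else idx t);
             js = sorted_list_of_set ((\<lambda>a. \<pi> (idx a)) ` {1..k});
             je = (\<lambda>t. if t = 0 then 0 else if t = k + 1 then n + 1 else js ! (t - 1))
         in (\<forall>x\<in>X. ie (x + 1) = ie x + 1) \<and> (\<forall>y\<in>Y. je (y + 1) = je y + 1)))"

definition bv_avoid_count :: "nat \<Rightarrow> nat \<Rightarrow> (nat \<Rightarrow> nat) \<Rightarrow> nat set \<Rightarrow> nat set \<Rightarrow> nat" where
  "bv_avoid_count n k \<sigma> X Y = card {\<pi>. \<pi> permutes {1..n} \<and> \<not> bv_contains n \<pi> k \<sigma> X Y}"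

definition non_derangements :: "nat \<Rightarrow> nat" where
  "non_derangements m = card {\<pi>. \<pi> permutes {1..m} \<and> (\<exists>i\<in>{1..m}. \<pi> i = i)}"

end

theory Submission
  imports Defs "HOL-Combinatorics.Multiset_Permutations"
begin

(*
  A permutation of [n] contains the pattern exactly when a succession pi(i+1) = pi(i) + 1
  occurs strictly to the left of the entry n. Sorting by the position p of n, a_(m+1) counts
  the permutations of [m] with no succession among their first p - 1 entries. Merging a
  succession into a single letter shows that these counts E(m,t) satisfy
  E(m+1,t) = E(m+1,t+1) + E(m,t), so E(m+1,t) = sum_j (-1)^j C(t,j) (m+1-j)!, and the sum
  over p telescopes to a_(m+1) = m! + (m+1)! - E(m+1,m). By inclusion-exclusion over fixed
  points the same alternating sums with t = m count derangements, which turns this into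
  a_(m+1) = c_(m+1) + c_m; everything else follows from the derangement recurrence.
*)

lemma sorted_list_of_set_three:
  assumes "(a::nat) < b" "b < c"
  shows "sorted_list_of_set {a, b, c} = [a, b, c]"
  using assms by (intro sorted_distinct_set_unique) auto

lemma bv_contains_123_iff:
  assumes "\<pi> permutes {1..n}"
  shows "bv_contains n \<pi> 3 id {1} {1, 3} \<longleftrightarrow>
    (\<exists>i j. 1 \<le> i \<and> i + 1 < j \<and> j \<le> n \<and> \<pi> (i + 1) = \<pi> i + 1 \<and> \<pi> j = n)"
proof -
  have three: "{1..3::nat} = {1, 2, 3}" by auto
  show ?thesis
  proof
    assume "bv_contains n \<pi> 3 id {1} {1, 3}"
    then show "\<exists>i j. 1 \<le> i \<and> i + 1 < j \<and> j \<le> n \<and> \<pi> (i + 1) = \<pi> i + 1 \<and> \<pi> j = n"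
      unfolding bv_contains_def three
      by (auto simp: sorted_list_of_set_three Let_def numeral_eq_Suc
          simp del: sorted_list_of_set_insert_remove) blast
  next
    assume "\<exists>i j. 1 \<le> i \<and> i + 1 < j \<and> j \<le> n \<and> \<pi> (i + 1) = \<pi> i + 1 \<and> \<pi> j = n"
    then obtain i j where ij: "1 \<le> i" "i + 1 < j" "j \<le> n" "\<pi> (i + 1) = \<pi> i + 1" "\<pi> j = n"
      by blast
    have "\<pi> (i + 1) \<noteq> \<pi> j"
      using ij(2) permutes_inj[OF assms] by (metis less_irrefl inj_eq)
    moreover have "\<pi> (i + 1) \<le> n"
      using permutes_in_image[OF assms, of "i + 1"] ij by auto
    ultimately have "\<pi> (i + 1) < \<pi> j" using ij(5) by linarith
    with ij show "bv_contains n \<pi> 3 id {1} {1, 3}"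
      unfolding bv_contains_def three
      by (intro exI[of _ "\<lambda>a. if a = 1 then i else if a = 2 then i + 1 else j"])
         (auto simp: sorted_list_of_set_three Let_def simp del: sorted_list_of_set_insert_remove)
  qed
qed

lemma bij_betw_one_line:
  "bij_betw (\<lambda>\<pi>. map \<pi> [1..<Suc n]) {\<pi>. \<pi> permutes {1..n}} (permutations_of_set {1..n})"
proof -
  let ?f = "\<lambda>\<pi>. map \<pi> [1..<Suc n]"
  have inj: "inj_on ?f {\<pi>. \<pi> permutes {1..n}}"
  proof (rule inj_onI, rule ext)
    fix \<pi> \<sigma> x
    assume "\<pi> \<in> {\<pi>. \<pi> permutes {1..n}}" "\<sigma> \<in> {\<pi>. \<pi> permutes {1..n}}" "?f \<pi> = ?f \<sigma>"
    then show "\<pi> x = \<sigma> x"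
      by (cases "x \<in> {1..n}")
        (auto simp: permutes_not_in map_eq_conv atLeastLessThanSuc_atLeastAtMost simp del: upt_Suc)
  qed
  have into: "?f ` {\<pi>. \<pi> permutes {1..n}} \<subseteq> permutations_of_set {1..n}"
  proof
    fix xs assume "xs \<in> ?f ` {\<pi>. \<pi> permutes {1..n}}"
    then obtain \<pi> where \<pi>: "\<pi> permutes {1..n}" "xs = ?f \<pi>" by blast
    have "inj_on \<pi> {1..n}" using permutes_inj_on[OF \<pi>(1)] .
    then show "xs \<in> permutations_of_set {1..n}"
      using permutes_image[OF \<pi>(1)] \<pi>(2)
      by (intro permutations_of_setI)
        (simp_all add: distinct_map atLeastLessThanSuc_atLeastAtMost del: upt_Suc)
  qed
  have "card (?f ` {\<pi>. \<pi> permutes {1..n}}) = card (permutations_of_set {1..n})"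
    using card_image[OF inj] card_permutations[of "{1..n}" n] by simp
  then show ?thesis
    using inj into by (simp add: bij_betw_def card_subset_eq)
qed

text \<open>One-line notation is 0-based here: list index \<open>i\<close> holds \<open>\<pi> (i + 1)\<close>.\<close>

definition avoids_pattern :: "nat list \<Rightarrow> bool" where
  "avoids_pattern xs \<longleftrightarrow>
     \<not> (\<exists>i j. Suc i < j \<and> j < length xs \<and> xs ! Suc i = Suc (xs ! i) \<and> xs ! j = length xs)"

lemma bv_contains_123_iff_one_line:
  assumes "\<pi> permutes {1..n}"
  shows "bv_contains n \<pi> 3 id {1} {1, 3} \<longleftrightarrow> \<not> avoids_pattern (map \<pi> [1..<Suc n])"
proof -
  let ?xs = "map \<pi> [1..<Suc n]"
  have "(\<exists>i j. 1 \<le> i \<and> i + 1 < j \<and> j \<le> n \<and> \<pi> (i + 1) = \<pi> i + 1 \<and> \<pi> j = n) \<longleftrightarrow>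
        (\<exists>i j. Suc i < j \<and> j < length ?xs \<and> ?xs ! Suc i = Suc (?xs ! i) \<and> ?xs ! j = length ?xs)"
  proof
    assume "\<exists>i j. 1 \<le> i \<and> i + 1 < j \<and> j \<le> n \<and> \<pi> (i + 1) = \<pi> i + 1 \<and> \<pi> j = n"
    then obtain i j where "1 \<le> i" "i + 1 < j" "j \<le> n" "\<pi> (i + 1) = \<pi> i + 1" "\<pi> j = n"
      by blast
    then show "\<exists>i j. Suc i < j \<and> j < length ?xs \<and> ?xs ! Suc i = Suc (?xs ! i) \<and> ?xs ! j = length ?xs"
      by (intro exI[of _ "i - 1"] exI[of _ "j - 1"]) (auto simp: nth_upt simp del: upt_Suc)
  next
    assume "\<exists>i j. Suc i < j \<and> j < length ?xs \<and> ?xs ! Suc i = Suc (?xs ! i) \<and> ?xs ! j = length ?xs"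
    then obtain i j
      where "Suc i < j" "j < length ?xs" "?xs ! Suc i = Suc (?xs ! i)" "?xs ! j = length ?xs"
      by blast
    then show "\<exists>i j. 1 \<le> i \<and> i + 1 < j \<and> j \<le> n \<and> \<pi> (i + 1) = \<pi> i + 1 \<and> \<pi> j = n"
      by (intro exI[of _ "Suc i"] exI[of _ "Suc j"]) (auto simp: nth_upt simp del: upt_Suc)
  qed
  then show ?thesis
    unfolding bv_contains_123_iff[OF assms] avoids_pattern_def by blast
qed

lemma avoid_count_eq_card_avoids_pattern:
  "bv_avoid_count n 3 id {1} {1, 3} = card {xs \<in> permutations_of_set {1..n}. avoids_pattern xs}"
proof -
  have "bij_betw (\<lambda>\<pi>. map \<pi> [1..<Suc n])
      {\<pi> \<in> {\<pi>. \<pi> permutes {1..n}}. \<not> bv_contains n \<pi> 3 id {1} {1, 3}}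
      {xs \<in> permutations_of_set {1..n}. avoids_pattern xs}"
    by (rule bij_betw_Collect[OF bij_betw_one_line]) (metis bv_contains_123_iff_one_line mem_Collect_eq)
  then show ?thesis
    unfolding bv_avoid_count_def by (simp add: bij_betw_same_card)
qed

definition insert_nth :: "nat \<Rightarrow> 'a \<Rightarrow> 'a list \<Rightarrow> 'a list" where
  "insert_nth p x xs = take p xs @ x # drop p xs"

definition remove_nth :: "nat \<Rightarrow> 'a list \<Rightarrow> 'a list" where
  "remove_nth p xs = take p xs @ drop (Suc p) xs"

lemma length_insert_nth: "p \<le> length xs \<Longrightarrow> length (insert_nth p x xs) = Suc (length xs)"
  by (simp add: insert_nth_def)

lemma nth_insert_nth_less: "i < p \<Longrightarrow> p \<le> length xs \<Longrightarrow> insert_nth p x xs ! i = xs ! i"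
  by (simp add: insert_nth_def nth_append)

lemma nth_insert_nth_same: "p \<le> length xs \<Longrightarrow> insert_nth p x xs ! p = x"
  by (simp add: insert_nth_def nth_append)

lemma length_remove_nth: "p < length xs \<Longrightarrow> length (remove_nth p xs) = length xs - 1"
  by (simp add: remove_nth_def)

lemma nth_remove_nth_less: "i < p \<Longrightarrow> remove_nth p xs ! i = xs ! i"
  by (cases "i < length xs") (auto simp: remove_nth_def nth_append)

lemma remove_nth_insert_nth: "p \<le> length xs \<Longrightarrow> remove_nth p (insert_nth p x xs) = xs"
  by (simp add: remove_nth_def insert_nth_def)

lemma insert_nth_remove_nth: "p < length xs \<Longrightarrow> insert_nth p (xs ! p) (remove_nth p xs) = xs"
  by (simp add: remove_nth_def insert_nth_def id_take_nth_drop[symmetric])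

lemma mset_insert_nth: "mset (insert_nth p x xs) = add_mset x (mset xs)"
proof -
  have "mset (take p xs) + mset (drop p xs) = mset xs"
    by (simp flip: mset_append)
  then show ?thesis by (simp add: insert_nth_def)
qed

lemma permutations_of_set_mset_eq:
  assumes "xs \<in> permutations_of_set A" "mset ys = mset xs"
  shows "ys \<in> permutations_of_set A"
  using assms mset_eq_setD[OF assms(2)] mset_eq_imp_distinct_iff[OF assms(2)]
  by (simp add: permutations_of_set_def)

lemma insert_nth_in_permutations_of_set:
  assumes "xs \<in> permutations_of_set A" "x \<notin> A"
  shows "insert_nth p x xs \<in> permutations_of_set (insert x A)"
proof -
  have "x # xs \<in> permutations_of_set (insert x A)"
    using assms by (auto simp: permutations_of_set_def)
  then show ?thesis
    by (rule permutations_of_set_mset_eq) (simp add: mset_insert_nth)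
qed

lemma remove_nth_in_permutations_of_set:
  assumes "xs \<in> permutations_of_set A" "p < length xs"
  shows "remove_nth p xs \<in> permutations_of_set (A - {xs ! p})"
proof -
  have "mset xs = add_mset (xs ! p) (mset (remove_nth p xs))"
    using mset_insert_nth[of p "xs ! p" "remove_nth p xs"] insert_nth_remove_nth[OF assms(2)] by simp
  then have "xs ! p # remove_nth p xs \<in> permutations_of_set A"
    by (intro permutations_of_set_mset_eq[OF assms(1)]) simp
  then show ?thesis
    by (auto simp: permutations_of_set_def)
qed

definition succ_free :: "nat \<Rightarrow> nat list \<Rightarrow> bool" where
  "succ_free t xs \<longleftrightarrow> (\<forall>i<t. Suc i < length xs \<longrightarrow> xs ! Suc i \<noteq> Suc (xs ! i))"

definition succ_free_count :: "nat \<Rightarrow> nat \<Rightarrow> nat" where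
  "succ_free_count m t = card {xs \<in> permutations_of_set {1..m}. succ_free t xs}"

lemma avoids_pattern_insert_nth_max:
  assumes ys: "ys \<in> permutations_of_set {1..m}" and p: "p \<le> m"
  shows "avoids_pattern (insert_nth p (Suc m) ys) \<longleftrightarrow> succ_free (p - 1) ys"
proof -
  let ?xs = "insert_nth p (Suc m) ys"
  have len: "length ys = m" using length_finite_permutations_of_set[OF ys] by simp
  have xs: "?xs \<in> permutations_of_set {1..Suc m}"
    using insert_nth_in_permutations_of_set[OF ys, of "Suc m" p] by (simp add: atLeastAtMostSuc_conv)
  have len_xs: "length ?xs = Suc m" using length_insert_nth[of p ys] p len by simp
  have max_at: "?xs ! j = Suc m \<longleftrightarrow> j = p" if "j < Suc m" for j
    using nth_eq_iff_index_eq[OF permutations_of_setD(2)[OF xs], of j p] that p len len_xs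
      nth_insert_nth_same[of p ys] by auto
  have prefix: "?xs ! i = ys ! i" if "i < p" for i
    using nth_insert_nth_less[OF that, of ys] p len by simp
  have "avoids_pattern ?xs \<longleftrightarrow> \<not> (\<exists>i. Suc i < p \<and> ?xs ! Suc i = Suc (?xs ! i))"
    unfolding avoids_pattern_def len_xs using max_at p by (metis less_Suc_eq_le)
  also have "\<dots> \<longleftrightarrow> \<not> (\<exists>i. Suc i < p \<and> ys ! Suc i = Suc (ys ! i))"
    using prefix by (metis Suc_lessD)
  also have "\<dots> \<longleftrightarrow> succ_free (p - 1) ys"
    unfolding succ_free_def len using p by (auto simp: less_diff_conv)
  finally show ?thesis .
qed

lemma bij_betw_insert_nth_max:
  assumes p: "p \<le> m"
  shows "bij_betw (insert_nth p (Suc m))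
    {ys \<in> permutations_of_set {1..m}. succ_free (p - 1) ys}
    {xs \<in> permutations_of_set {1..Suc m}. avoids_pattern xs \<and> xs ! p = Suc m}"
proof (rule bij_betw_byWitness[where f' = "remove_nth p"])
  show "\<forall>ys \<in> {ys \<in> permutations_of_set {1..m}. succ_free (p - 1) ys}.
      remove_nth p (insert_nth p (Suc m) ys) = ys"
    using p by (auto simp: remove_nth_insert_nth length_finite_permutations_of_set)
  show "\<forall>xs \<in> {xs \<in> permutations_of_set {1..Suc m}. avoids_pattern xs \<and> xs ! p = Suc m}.
      insert_nth p (Suc m) (remove_nth p xs) = xs"
  proof clarify
    fix xs assume xs: "xs \<in> permutations_of_set {1..Suc m}" "xs ! p = Suc m"
    then have "p < length xs" using p by (simp add: length_finite_permutations_of_set)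
    then show "insert_nth p (Suc m) (remove_nth p xs) = xs"
      using insert_nth_remove_nth xs(2) by metis
  qed
  show "insert_nth p (Suc m) ` {ys \<in> permutations_of_set {1..m}. succ_free (p - 1) ys}
      \<subseteq> {xs \<in> permutations_of_set {1..Suc m}. avoids_pattern xs \<and> xs ! p = Suc m}"
  proof clarify
    fix ys assume ys: "ys \<in> permutations_of_set {1..m}" "succ_free (p - 1) ys"
    have "insert_nth p (Suc m) ys \<in> permutations_of_set {1..Suc m}"
      using insert_nth_in_permutations_of_set[OF ys(1), of "Suc m" p]
      by (simp add: atLeastAtMostSuc_conv)
    moreover have "insert_nth p (Suc m) ys ! p = Suc m"
      using nth_insert_nth_same[of p ys] p length_finite_permutations_of_set[OF ys(1)] by simp
    ultimately show "insert_nth p (Suc m) ys \<in> permutations_of_set {1..Suc m}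
        \<and> avoids_pattern (insert_nth p (Suc m) ys) \<and> insert_nth p (Suc m) ys ! p = Suc m"
      using avoids_pattern_insert_nth_max[OF ys(1) p] ys(2) by simp
  qed
  show "remove_nth p ` {xs \<in> permutations_of_set {1..Suc m}. avoids_pattern xs \<and> xs ! p = Suc m}
      \<subseteq> {ys \<in> permutations_of_set {1..m}. succ_free (p - 1) ys}"
  proof clarify
    fix xs assume xs: "xs \<in> permutations_of_set {1..Suc m}" "avoids_pattern xs" "xs ! p = Suc m"
    have "p < length xs" using xs p by (simp add: length_finite_permutations_of_set)
    moreover have "{1..Suc m} - {Suc m} = {1..m}" by auto
    ultimately have ys: "remove_nth p xs \<in> permutations_of_set {1..m}"
      using remove_nth_in_permutations_of_set[OF xs(1)] xs(3) by metis
    have "insert_nth p (Suc m) (remove_nth p xs) = xs"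
      using insert_nth_remove_nth[OF \<open>p < length xs\<close>] xs(3) by simp
    then show "remove_nth p xs \<in> permutations_of_set {1..m} \<and> succ_free (p - 1) (remove_nth p xs)"
      using avoids_pattern_insert_nth_max[OF ys p] xs(2) ys by simp
  qed
qed

lemma card_avoids_pattern_Suc:
  "card {xs \<in> permutations_of_set {1..Suc m}. avoids_pattern xs} = (\<Sum>p\<le>m. succ_free_count m (p - 1))"
proof -
  define S where "S p = {xs \<in> permutations_of_set {1..Suc m}. avoids_pattern xs \<and> xs ! p = Suc m}" for p
  have partition: "{xs \<in> permutations_of_set {1..Suc m}. avoids_pattern xs} = (\<Union>p\<le>m. S p)"
  proof (intro equalityI subsetI)
    fix xs assume xs: "xs \<in> {xs \<in> permutations_of_set {1..Suc m}. avoids_pattern xs}"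
    then have "Suc m \<in> set xs" "length xs = Suc m"
      by (auto simp: permutations_of_set_def length_finite_permutations_of_set)
    then obtain p where "p \<le> m" "xs ! p = Suc m" by (metis in_set_conv_nth less_Suc_eq_le)
    then show "xs \<in> (\<Union>p\<le>m. S p)" using xs by (auto simp: S_def)
  qed (auto simp: S_def)
  have disjoint: "S p \<inter> S q = {}" if "p \<le> m" "q \<le> m" "p \<noteq> q" for p q
  proof (rule equals0I)
    fix xs assume "xs \<in> S p \<inter> S q"
    then have xs: "xs \<in> permutations_of_set {1..Suc m}" "xs ! p = xs ! q" by (auto simp: S_def)
    then show False
      using that length_finite_permutations_of_set[OF xs(1)]
        nth_eq_iff_index_eq[OF permutations_of_setD(2)[OF xs(1)], of p q] by simp
  qed
  have "card (S p) = succ_free_count m (p - 1)" if "p \<le> m" for p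
    using bij_betw_same_card[OF bij_betw_insert_nth_max[OF that]]
    by (simp add: succ_free_count_def S_def)
  moreover have "card (\<Union>p\<le>m. S p) = (\<Sum>p\<le>m. card (S p))"
    by (rule card_UN_disjoint) (use disjoint in \<open>auto simp: S_def\<close>)
  ultimately show ?thesis using partition by simp
qed

definition shift_up :: "nat \<Rightarrow> nat \<Rightarrow> nat" where
  "shift_up x y = (if x < y then Suc y else y)"

definition shift_down :: "nat \<Rightarrow> nat \<Rightarrow> nat" where
  "shift_down x y = (if x < y then y - 1 else y)"

lemma shift_down_shift_up [simp]: "shift_down x (shift_up x y) = y"
  by (simp add: shift_down_def shift_up_def)

lemma shift_up_shift_down: "y \<noteq> Suc x \<Longrightarrow> shift_up x (shift_down x y) = y"
  by (auto simp: shift_down_def shift_up_def)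

lemma inj_shift_up: "inj (shift_up x)"
  by (metis injI shift_down_shift_up)

lemma inj_on_shift_down: "inj_on (shift_down x) (- {Suc x})"
  by (metis inj_onI ComplD singletonI shift_up_shift_down)

lemma shift_up_image:
  assumes "x \<in> {1..k}"
  shows "insert (Suc x) (shift_up x ` {1..k}) = {1..Suc k}"
proof (intro equalityI subsetI)
  fix y assume y: "y \<in> {1..Suc k}"
  show "y \<in> insert (Suc x) (shift_up x ` {1..k})"
  proof (cases "y \<le> x \<or> y = Suc x")
    case True
    then show ?thesis using assms y by (auto simp: shift_up_def image_iff intro!: bexI[of _ y])
  next
    case False
    then have "y = shift_up x (y - 1)" "y - 1 \<in> {1..k}" using assms y by (auto simp: shift_up_def)
    then show ?thesis by blast
  qed
qed (use assms in \<open>auto simp: shift_up_def\<close>)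

lemma shift_down_image:
  assumes "x \<in> {1..k}"
  shows "shift_down x ` ({1..Suc k} - {Suc x}) = {1..k}"
proof -
  have "{1..Suc k} - {Suc x} = shift_up x ` {1..k}"
    using shift_up_image[OF assms] by (auto simp: shift_up_def)
  then show ?thesis by (simp add: image_image)
qed

lemma map_in_permutations_of_set:
  "xs \<in> permutations_of_set A \<Longrightarrow> inj_on f A \<Longrightarrow> map f xs \<in> permutations_of_set (f ` A)"
  by (auto simp: permutations_of_set_def distinct_map)

definition expand_succ :: "nat \<Rightarrow> nat list \<Rightarrow> nat list" where
  "expand_succ t ys = insert_nth (Suc t) (Suc (ys ! t)) (map (shift_up (ys ! t)) ys)"

definition contract_succ :: "nat \<Rightarrow> nat list \<Rightarrow> nat list" where
  "contract_succ t xs = map (shift_down (xs ! t)) (remove_nth (Suc t) xs)"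

lemma succ_free_Suc:
  "succ_free (Suc t) xs \<longleftrightarrow> succ_free t xs \<and> (Suc t < length xs \<longrightarrow> xs ! Suc t \<noteq> Suc (xs ! t))"
  unfolding succ_free_def by (auto simp: less_Suc_eq)

lemma shift_up_eq_Suc_shift_up_iff:
  "b \<noteq> x \<Longrightarrow> shift_up x a = Suc (shift_up x b) \<longleftrightarrow> a = Suc b"
  by (auto simp: shift_up_def)

lemma shift_down_eq_Suc_shift_down_iff:
  "a \<noteq> Suc x \<Longrightarrow> b \<noteq> x \<Longrightarrow> b \<noteq> Suc x \<Longrightarrow> shift_down x a = Suc (shift_down x b) \<longleftrightarrow> a = Suc b"
  by (auto simp: shift_down_def)

lemma nth_expand_succ:
  "t < length ys \<Longrightarrow> i \<le> t \<Longrightarrow> expand_succ t ys ! i = shift_up (ys ! t) (ys ! i)"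
  by (simp add: expand_succ_def nth_insert_nth_less)

lemma nth_contract_succ:
  "Suc t < length xs \<Longrightarrow> i \<le> t \<Longrightarrow> contract_succ t xs ! i = shift_down (xs ! t) (xs ! i)"
  by (simp add: contract_succ_def nth_remove_nth_less length_remove_nth)

lemma succ_free_expand_succ:
  assumes ys: "ys \<in> permutations_of_set A" "succ_free t ys" and t: "t < length ys"
  shows "succ_free t (expand_succ t ys)"
  unfolding succ_free_def
proof (intro allI impI)
  fix i assume i: "i < t"
  have "ys ! i \<noteq> ys ! t"
    using nth_eq_iff_index_eq[OF permutations_of_setD(2)[OF ys(1)], of i t] i t by simp
  moreover have "ys ! Suc i \<noteq> Suc (ys ! i)" using ys(2) i t unfolding succ_free_def by simp
  ultimately show "expand_succ t ys ! Suc i \<noteq> Suc (expand_succ t ys ! i)"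
    using i t by (simp add: nth_expand_succ shift_up_eq_Suc_shift_up_iff)
qed

lemma succ_free_contract_succ:
  assumes xs: "xs \<in> permutations_of_set A" "succ_free t xs" "xs ! Suc t = Suc (xs ! t)"
    and t: "Suc t < length xs"
  shows "succ_free t (contract_succ t xs)"
  unfolding succ_free_def
proof (intro allI impI)
  fix i assume i: "i < t"
  have dist: "distinct xs" using permutations_of_setD(2)[OF xs(1)] .
  have "xs ! i \<noteq> xs ! t" "xs ! i \<noteq> Suc (xs ! t)" "xs ! Suc i \<noteq> Suc (xs ! t)"
    using nth_eq_iff_index_eq[OF dist, of i t] nth_eq_iff_index_eq[OF dist, of i "Suc t"]
      nth_eq_iff_index_eq[OF dist, of "Suc i" "Suc t"] i t xs(3) by simp_all
  moreover have "xs ! Suc i \<noteq> Suc (xs ! i)" using xs(2) i t unfolding succ_free_def by simp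
  ultimately show "contract_succ t xs ! Suc i \<noteq> Suc (contract_succ t xs ! i)"
    using i t by (simp add: nth_contract_succ shift_down_eq_Suc_shift_down_iff)
qed

lemma expand_succ:
  assumes ys: "ys \<in> permutations_of_set {1..k}" and t: "t < k"
  shows "expand_succ t ys \<in> permutations_of_set {1..Suc k}"
    and "expand_succ t ys ! Suc t = Suc (expand_succ t ys ! t)"
    and "contract_succ t (expand_succ t ys) = ys"
proof -
  have len: "length ys = k" using length_finite_permutations_of_set[OF ys] by simp
  define x where "x = ys ! t"
  have x: "x \<in> {1..k}" using nth_mem[of t ys] t len permutations_of_setD(1)[OF ys] x_def by auto
  define zs where "zs = map (shift_up x) ys"
  have expand: "expand_succ t ys = insert_nth (Suc t) (Suc x) zs"
    by (simp add: expand_succ_def x_def zs_def)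
  have zs: "zs \<in> permutations_of_set (shift_up x ` {1..k})"
    unfolding zs_def using ys inj_shift_up by (rule map_in_permutations_of_set[OF _ inj_on_subset]) simp
  have "Suc x \<notin> shift_up x ` {1..k}" by (auto simp: shift_up_def)
  from insert_nth_in_permutations_of_set[OF zs this]
  show "expand_succ t ys \<in> permutations_of_set {1..Suc k}"
    unfolding expand shift_up_image[OF x] .
  have st: "Suc t \<le> length zs" using len t by (simp add: zs_def)
  have at_t: "expand_succ t ys ! t = x"
    using nth_expand_succ[of t ys t] len t by (simp add: x_def shift_up_def)
  show "expand_succ t ys ! Suc t = Suc (expand_succ t ys ! t)"
    using nth_insert_nth_same[OF st, of "Suc x"] at_t by (simp add: expand)
  have "remove_nth (Suc t) (expand_succ t ys) = zs"
    unfolding expand using remove_nth_insert_nth[OF st] .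
  then show "contract_succ t (expand_succ t ys) = ys"
    unfolding contract_succ_def at_t by (simp add: zs_def comp_def)
qed

lemma contract_succ:
  assumes xs: "xs \<in> permutations_of_set {1..Suc k}" "xs ! Suc t = Suc (xs ! t)" and t: "t < k"
  shows "contract_succ t xs \<in> permutations_of_set {1..k}"
    and "expand_succ t (contract_succ t xs) = xs"
proof -
  have st: "Suc t < length xs" using length_finite_permutations_of_set[OF xs(1)] t by simp
  define x where "x = xs ! t"
  have "Suc x \<in> {1..Suc k}" using nth_mem[OF st] xs(2) permutations_of_setD(1)[OF xs(1)] x_def by simp
  then have x: "x \<in> {1..k}"
    using nth_mem[of t xs] st permutations_of_setD(1)[OF xs(1)] x_def by fastforce
  define zs where "zs = remove_nth (Suc t) xs"
  have zs: "zs \<in> permutations_of_set ({1..Suc k} - {Suc x})"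
    using remove_nth_in_permutations_of_set[OF xs(1) st] xs(2) x_def zs_def by simp
  have contract: "contract_succ t xs = map (shift_down x) zs"
    by (simp add: contract_succ_def x_def zs_def)
  have "inj_on (shift_down x) ({1..Suc k} - {Suc x})"
    using inj_on_shift_down by (rule inj_on_subset) auto
  from map_in_permutations_of_set[OF zs this]
  show "contract_succ t xs \<in> permutations_of_set {1..k}"
    unfolding contract shift_down_image[OF x] .
  have at_t: "contract_succ t xs ! t = x"
    using nth_contract_succ[OF st, of t] by (simp add: shift_down_def x_def)
  have "map (shift_up x) (contract_succ t xs) = zs"
    unfolding contract map_map
    by (rule map_idI) (use zs in \<open>auto simp: permutations_of_set_def shift_up_shift_down\<close>)
  then have "expand_succ t (contract_succ t xs) = insert_nth (Suc t) (Suc x) zs"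
    by (simp add: expand_succ_def at_t)
  also have "\<dots> = xs" unfolding zs_def using insert_nth_remove_nth[OF st] xs(2) x_def by simp
  finally show "expand_succ t (contract_succ t xs) = xs" .
qed

text \<open>A succession at position \<open>t\<close> is merged into one letter by \<open>contract_succ\<close>.\<close>

lemma succ_free_count_Suc:
  assumes "t < k"
  shows "succ_free_count (Suc k) t = succ_free_count (Suc k) (Suc t) + succ_free_count k t"
proof -
  define B where "B = {xs \<in> permutations_of_set {1..Suc k}. succ_free t xs \<and> xs ! Suc t = Suc (xs ! t)}"
  have split: "{xs \<in> permutations_of_set {1..Suc k}. succ_free t xs}
      = {xs \<in> permutations_of_set {1..Suc k}. succ_free (Suc t) xs} \<union> B"
    and disjoint: "{xs \<in> permutations_of_set {1..Suc k}. succ_free (Suc t) xs} \<inter> B = {}"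
    using assms by (auto simp: B_def succ_free_Suc length_finite_permutations_of_set)
  have "bij_betw (contract_succ t) B {ys \<in> permutations_of_set {1..k}. succ_free t ys}"
    by (rule bij_betw_byWitness[where f' = "expand_succ t"])
       (use expand_succ contract_succ succ_free_expand_succ succ_free_contract_succ assms
         in \<open>auto simp: B_def length_finite_permutations_of_set\<close>)
  then have "card B = succ_free_count k t"
    by (simp add: bij_betw_same_card succ_free_count_def)
  then show ?thesis
    unfolding succ_free_count_def split
    by (subst card_Un_disjoint) (use disjoint in \<open>auto simp: B_def\<close>)
qed

text \<open>Inclusion-exclusion over \<open>t\<close> events any \<open>j\<close> of which hold together for \<open>(m - j)!\<close>
  permutations of an \<open>m\<close>-set: prescribed successions, or (for \<open>t = m\<close>) fixed points.\<close>

definition alt_fact_sum :: "nat \<Rightarrow> nat \<Rightarrow> int" where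
  "alt_fact_sum m t = (\<Sum>j\<le>t. (-1) ^ j * int (t choose j) * fact (m - j))"

lemma alt_fact_sum_Suc: "alt_fact_sum m (Suc t) = alt_fact_sum m t - alt_fact_sum (m - 1) t"
proof -
  define f where "f i = (-1) ^ i * int (t choose i) * (fact (m - i) :: int)" for i
  define g where "g i = (-1) ^ i * int (t choose i) * (fact (m - 1 - i) :: int)" for i
  have "alt_fact_sum m (Suc t) = fact m + (\<Sum>i\<le>t. f (Suc i) - g i)"
    unfolding alt_fact_sum_def f_def g_def sum.atMost_Suc_shift
    by (simp add: algebra_simps sum_subtractf sum_negf)
  also have "\<dots> = (f 0 + (\<Sum>i\<le>t. f (Suc i))) - (\<Sum>i\<le>t. g i)"
    by (simp add: f_def sum_subtractf)
  also have "f 0 + (\<Sum>i\<le>t. f (Suc i)) = (\<Sum>i\<le>Suc t. f i)"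
    by (rule sum.atMost_Suc_shift[symmetric])
  also have "\<dots> = alt_fact_sum m t"
    by (simp add: alt_fact_sum_def f_def)
  also have "(\<Sum>i\<le>t. g i) = alt_fact_sum (m - 1) t"
    by (simp add: alt_fact_sum_def g_def)
  finally show ?thesis .
qed

lemma succ_free_count_0: "succ_free_count m 0 = fact m"
  by (simp add: succ_free_count_def succ_free_def)

lemma succ_free_count_eq_alt_fact_sum:
  "t \<le> k \<Longrightarrow> int (succ_free_count (Suc k) t) = alt_fact_sum (Suc k) t"
proof (induction t arbitrary: k)
  case 0
  then show ?case by (simp add: succ_free_count_0 alt_fact_sum_def algebra_simps)
next
  case (Suc t)
  then obtain k' where k: "k = Suc k'" by (cases k) auto
  have "succ_free_count (Suc k) (Suc t) = succ_free_count (Suc k) t - succ_free_count k t"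
    using succ_free_count_Suc[of t k] Suc.prems by simp
  moreover have "int (succ_free_count (Suc k) t) = alt_fact_sum (Suc k) t"
    using Suc.IH[of k] Suc.prems by simp
  moreover have "int (succ_free_count k t) = alt_fact_sum k t"
    using Suc.IH[of k'] Suc.prems k by simp
  ultimately show ?case
    using alt_fact_sum_Suc[of "Suc k" t] succ_free_count_Suc[of t k] Suc.prems by simp
qed

lemma succ_free_count_telescope:
  "s \<le> m \<Longrightarrow> int (succ_free_count (Suc m) s) = fact (Suc m) - (\<Sum>t<s. int (succ_free_count m t))"
proof (induction s)
  case 0
  then show ?case by (simp add: succ_free_count_0 algebra_simps)
next
  case (Suc s)
  then show ?case using succ_free_count_Suc[of s m] by simp
qed

lemma avoid_count_Suc:
  "int (bv_avoid_count (Suc m) 3 id {1} {1, 3}) = fact m + fact (Suc m) - alt_fact_sum (Suc m) m"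
proof -
  have "bv_avoid_count (Suc m) 3 id {1} {1, 3} = (\<Sum>p\<le>m. succ_free_count m (p - 1))"
    unfolding avoid_count_eq_card_avoids_pattern card_avoids_pattern_Suc ..
  also have "\<dots> = succ_free_count m 0 + (\<Sum>t<m. succ_free_count m t)"
    by (simp add: sum.atMost_shift)
  finally have "int (bv_avoid_count (Suc m) 3 id {1} {1, 3})
      = fact m + (\<Sum>t<m. int (succ_free_count m t))"
    by (simp add: succ_free_count_0)
  also have "(\<Sum>t<m. int (succ_free_count m t)) = fact (Suc m) - alt_fact_sum (Suc m) m"
    using succ_free_count_telescope[of m m] succ_free_count_eq_alt_fact_sum[of m m] by simp
  finally show ?thesis by linarith
qed

lemma of_int_alt_fact_sum_diag:
  "real_of_int (alt_fact_sum m m) = fact m * (\<Sum>k\<le>m. (-1) ^ k / fact k)"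
proof -
  have "real_of_int (alt_fact_sum m m) = (\<Sum>j\<le>m. (-1) ^ j * (real (m choose j) * fact (m - j)))"
    by (simp add: alt_fact_sum_def mult.assoc)
  also have "\<dots> = (\<Sum>j\<le>m. fact m * ((-1) ^ j / fact j))"
    by (rule sum.cong) (simp_all add: binomial_fact)
  finally show ?thesis by (simp add: sum_distrib_left)
qed

lemma alt_fact_sum_diag_Suc:
  "alt_fact_sum (Suc m) (Suc m) = int (Suc m) * alt_fact_sum m m + (-1) ^ Suc m"
proof -
  define S where "S = (\<Sum>k\<le>m. (-1) ^ k / fact k :: real)"
  have split: "(\<Sum>k\<le>Suc m. (-1) ^ k / fact k :: real) = S + (-1) ^ Suc m / fact (Suc m)"
    by (simp add: S_def)
  have "real_of_int (alt_fact_sum (Suc m) (Suc m))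
      = fact (Suc m) * S + fact (Suc m) * ((-1) ^ Suc m / fact (Suc m))"
    unfolding of_int_alt_fact_sum_diag split by (simp only: distrib_left)
  also have "fact (Suc m) * ((-1) ^ Suc m / fact (Suc m)) = ((-1) ^ Suc m :: real)"
    by (simp del: fact_Suc)
  also have "fact (Suc m) * S = real (Suc m) * real_of_int (alt_fact_sum m m)"
    by (simp add: of_int_alt_fact_sum_diag S_def)
  finally have "real_of_int (alt_fact_sum (Suc m) (Suc m))
      = real_of_int (int (Suc m) * alt_fact_sum m m + (-1) ^ Suc m)" by simp
  then show ?thesis by (rule of_int_eq_iff[THEN iffD1])
qed

lemma sum_Pow_card:
  fixes g :: "nat \<Rightarrow> 'b::comm_semiring_1"
  assumes "finite A"
  shows "(\<Sum>F\<in>Pow A. g (card F)) = (\<Sum>j\<le>card A. of_nat (card A choose j) * g j)"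
proof -
  define S where "S j = {F. F \<subseteq> A \<and> card F = j}" for j
  have Pow: "Pow A = (\<Union>j\<le>card A. S j)"
    using assms by (auto simp: S_def card_mono)
  have "(\<Sum>F\<in>Pow A. g (card F)) = (\<Sum>j\<le>card A. \<Sum>F\<in>S j. g (card F))"
    unfolding Pow using assms by (intro sum.UNION_disjoint) (auto simp: S_def)
  also have "\<dots> = (\<Sum>j\<le>card A. of_nat (card A choose j) * g j)"
  proof (rule sum.cong)
    fix j
    have "(\<Sum>F\<in>S j. g (card F)) = of_nat (card (S j)) * g j"
      by (simp add: S_def)
    also have "card (S j) = card A choose j"
      unfolding S_def by (rule n_subsets[OF assms])
    finally show "(\<Sum>F\<in>S j. g (card F)) = of_nat (card A choose j) * g j" .
  qed simp
  finally show ?thesis .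
qed

text \<open>After exchanging the order of summation the inner sums are \<open>(1 - 1)\<^sup>s\<close>,
  so only the term \<open>s = 0\<close> survives.\<close>
lemma sum_binomial_alt_fact_sum: "(\<Sum>j\<le>m. int (m choose j) * alt_fact_sum (m - j) (m - j)) = fact m"
proof -
  define u :: "nat \<Rightarrow> nat \<Rightarrow> real" where "u j k = fact m * (1 / fact j) * ((-1) ^ k / fact k)" for j k
  have "real_of_int (\<Sum>j\<le>m. int (m choose j) * alt_fact_sum (m - j) (m - j))
      = (\<Sum>j\<le>m. real (m choose j) * (fact (m - j) * (\<Sum>k\<le>m - j. (-1) ^ k / fact k)))"
    by (simp add: of_int_alt_fact_sum_diag)
  also have "\<dots> = (\<Sum>j\<le>m. \<Sum>k\<le>m - j. u j k)"
  proof (rule sum.cong)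
    fix j assume "j \<in> {..m}"
    then have "real (m choose j) * fact (m - j) = fact m / fact j"
      by (simp add: binomial_fact)
    then show "real (m choose j) * (fact (m - j) * (\<Sum>k\<le>m - j. (-1) ^ k / fact k)) = (\<Sum>k\<le>m - j. u j k)"
      by (simp add: u_def sum_distrib_left mult.assoc[symmetric])
  qed simp
  also have "\<dots> = (\<Sum>(j, k)\<in>{(j, k). j + k \<le> m}. u j k)"
  proof -
    have "{(j, k). j + k \<le> m} = Sigma {..m} (\<lambda>j. {..m - j})" by auto
    then show ?thesis by (simp add: sum.Sigma)
  qed
  also have "\<dots> = (\<Sum>s\<le>m. \<Sum>i\<le>s. u i (s - i))"
    by (rule sum.triangle_reindex_eq)
  also have "\<dots> = (\<Sum>s\<le>m. fact m / fact s * (1 + (-1)) ^ s)"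
  proof (rule sum.cong)
    fix s
    have "(\<Sum>i\<le>s. u i (s - i)) = (\<Sum>i\<le>s. fact m / fact s * (real (s choose i) * 1 ^ i * (-1) ^ (s - i)))"
    proof (rule sum.cong)
      fix i assume "i \<in> {..s}"
      then have "real (s choose i) = fact s / (fact i * fact (s - i))" by (simp add: binomial_fact)
      then show "u i (s - i) = fact m / fact s * (real (s choose i) * 1 ^ i * (-1) ^ (s - i))"
        by (simp add: u_def)
    qed simp
    also have "\<dots> = fact m / fact s * (1 + (-1)) ^ s"
      by (simp only: binomial_ring[of "1::real" "-1" s] sum_distrib_left)
    finally show "(\<Sum>i\<le>s. u i (s - i)) = fact m / fact s * (1 + (-1)) ^ s" .
  qed simp
  also have "\<dots> = fact m"
    by (simp add: power_0_left sum.atMost_shift)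
  finally show ?thesis by (metis of_int_eq_iff of_int_fact)
qed

definition derangements :: "'a set \<Rightarrow> ('a \<Rightarrow> 'a) set" where
  "derangements A = {p. p permutes A \<and> (\<forall>x\<in>A. p x \<noteq> x)}"

lemma finite_derangements: "finite A \<Longrightarrow> finite (derangements A)"
  by (rule finite_subset[OF _ finite_permutations]) (auto simp: derangements_def)

lemma card_permutes_eq_sum_derangements:
  assumes "finite A"
  shows "card {p. p permutes A} = (\<Sum>F\<in>Pow A. card (derangements (A - F)))"
proof -
  have partition: "{p. p permutes A} = (\<Union>F\<in>Pow A. derangements (A - F))"
  proof (intro equalityI subsetI)
    fix p assume "p \<in> {p. p permutes A}"
    then have "p permutes (A - {x\<in>A. p x = x})"
      unfolding permutes_def by auto
    then have "p \<in> derangements (A - {x\<in>A. p x = x})"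
      by (auto simp: derangements_def)
    show "p \<in> (\<Union>F\<in>Pow A. derangements (A - F))"
      by (rule UN_I[of "{x\<in>A. p x = x}"]) (use \<open>p \<in> derangements _\<close> in auto)
  qed (auto simp: derangements_def intro: permutes_subset)
  have fixed_points: "F = {x\<in>A. p x = x}" if "F \<subseteq> A" "p \<in> derangements (A - F)" for F p
    using that by (auto simp: derangements_def permutes_not_in)
  have disjoint: "\<forall>F\<in>Pow A. \<forall>G\<in>Pow A. F \<noteq> G \<longrightarrow> derangements (A - F) \<inter> derangements (A - G) = {}"
  proof (intro ballI impI equals0I)
    fix F G p assume "F \<in> Pow A" "G \<in> Pow A" "F \<noteq> G" "p \<in> derangements (A - F) \<inter> derangements (A - G)"
    then show False using fixed_points[of F p] fixed_points[of G p] by auto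
  qed
  show ?thesis
    unfolding partition using assms
    by (intro card_UN_disjoint[OF _ _ disjoint]) (simp_all add: finite_derangements)
qed

lemma card_derangements:
  assumes "finite A"
  shows "int (card (derangements A)) = alt_fact_sum (card A) (card A)"
  using assms
proof (induction "card A" arbitrary: A rule: less_induct)
  case less
  define m where "m = card A"
  have IH: "int (card (derangements (A - F))) = alt_fact_sum (m - card F) (m - card F)"
    if "F \<in> Pow A - {{}}" for F
  proof -
    have F: "finite F" "F \<noteq> {}" "F \<subseteq> A" using that less.prems finite_subset by auto
    then have "0 < card F" "card F \<le> card A"
      using less.prems by (simp_all add: card_gt_0_iff card_mono)
    then have "card (A - F) = m - card F" "card (A - F) < card A"
      using F by (simp_all add: m_def card_Diff_subset)
    then show ?thesis using less.hyps[of "A - F"] less.prems by simp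
  qed
  have "fact m = (\<Sum>F\<in>Pow A. int (card (derangements (A - F))))"
    using card_permutations[OF m_def[symmetric] less.prems]
      card_permutes_eq_sum_derangements[OF less.prems]
    by (metis of_nat_fact of_nat_sum)
  also have "\<dots> = int (card (derangements A)) + (\<Sum>F\<in>Pow A - {{}}. alt_fact_sum (m - card F) (m - card F))"
    using less.prems IH by (simp add: sum.remove[of _ "{}"])
  finally have "fact m = int (card (derangements A))
      + (\<Sum>F\<in>Pow A - {{}}. alt_fact_sum (m - card F) (m - card F))" .
  moreover have "fact m = alt_fact_sum m m + (\<Sum>F\<in>Pow A - {{}}. alt_fact_sum (m - card F) (m - card F))"
    using sum_binomial_alt_fact_sum[of m]
      sum_Pow_card[OF less.prems, of "\<lambda>j. alt_fact_sum (m - j) (m - j)"] less.prems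
    by (simp add: m_def sum.remove[of _ "{}"])
  ultimately show ?case by (simp add: m_def)
qed

lemma non_derangements_eq: "int (non_derangements m) = fact m - alt_fact_sum m m"
proof -
  have "{\<pi>. \<pi> permutes {1..m} \<and> (\<exists>i\<in>{1..m}. \<pi> i = i)} = {\<pi>. \<pi> permutes {1..m}} - derangements {1..m}"
    by (auto simp: derangements_def)
  moreover have "derangements {1..m} \<subseteq> {\<pi>. \<pi> permutes {1..m}}"
    by (auto simp: derangements_def)
  ultimately have "non_derangements m = fact m - card (derangements {1..m})"
    by (simp add: non_derangements_def card_Diff_subset finite_derangements card_permutations)
  moreover have "card (derangements {1..m}) \<le> fact m"
    using card_mono[OF finite_permutations \<open>derangements {1..m} \<subseteq> _\<close>] card_permutations[of "{1..m}" m]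
    by simp
  ultimately show ?thesis using card_derangements[of "{1..m}"] by simp
qed

lemma non_derangements_Suc_Suc:
  "non_derangements (Suc (Suc m)) = Suc m * (non_derangements (Suc m) + non_derangements m)"
proof -
  have "int (non_derangements (Suc (Suc m)))
      = int (Suc m * (non_derangements (Suc m) + non_derangements m))"
    unfolding of_nat_mult of_nat_add non_derangements_eq
      alt_fact_sum_diag_Suc[of "Suc m"] alt_fact_sum_diag_Suc[of m]
    by (simp add: algebra_simps)
  then show ?thesis by (simp only: of_nat_eq_iff)
qed

lemma non_derangements_closed_form:
  "real (non_derangements m) = fact m * (1 - (\<Sum>k=0..m. (-1) ^ k / fact k))"
proof -
  have "real (non_derangements m) = real_of_int (int (non_derangements m))" by simp
  also have "\<dots> = fact m - real_of_int (alt_fact_sum m m)"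
    by (simp add: non_derangements_eq)
  finally show ?thesis
    by (simp add: of_int_alt_fact_sum_diag atLeast0AtMost algebra_simps)
qed

lemma avoid_count_eq_non_derangements:
  "bv_avoid_count (Suc m) 3 id {1} {1, 3} = non_derangements (Suc m) + non_derangements m"
proof -
  have "int (bv_avoid_count (Suc m) 3 id {1} {1, 3})
      = int (non_derangements (Suc m)) + int (non_derangements m)"
    using avoid_count_Suc[of m] alt_fact_sum_Suc[of "Suc m" m] by (simp add: non_derangements_eq)
  then show ?thesis by (simp flip: of_nat_add)
qed

lemma fact_Suc_minus_alt_fact_sum:
  "fact (Suc m) - alt_fact_sum (Suc m) m
    = (\<Sum>k=0..<m. (-1) ^ (Suc m - k) * int (fact (k + 1)) * int (m choose k))"
proof -
  define g where "g j = (-1) ^ j * int (m choose j) * (fact (Suc m - j) :: int)" for j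
  define h where "h k = (-1) ^ (Suc m - k) * int (fact (k + 1)) * int (m choose k)" for k
  have "alt_fact_sum (Suc m) m = g 0 + (\<Sum>j<m. g (Suc j))"
    unfolding alt_fact_sum_def g_def by (rule sum.atMost_shift)
  then have "fact (Suc m) - alt_fact_sum (Suc m) m = (\<Sum>j<m. - g (Suc j))"
    by (simp add: g_def sum_negf)
  also have "\<dots> = (\<Sum>j<m. h (m - Suc j))"
  proof (rule sum.cong)
    fix j assume "j \<in> {..<m}"
    then have "Suc m - (m - Suc j) = Suc (Suc j)" "m - Suc j + 1 = m - j"
      "m choose (m - Suc j) = m choose Suc j"
      using binomial_symmetric[of "Suc j" m] by simp_all
    then show "- g (Suc j) = h (m - Suc j)"
      by (simp add: g_def h_def)
  qed simp
  also have "\<dots> = (\<Sum>k<m. h k)"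
    by (rule sum.nat_diff_reindex)
  finally show ?thesis by (simp add: h_def atLeast0LessThan)
qed

lemma avoid_count_formula:
  "int (bv_avoid_count (Suc m) 3 id {1} {1, 3})
    = int (fact m) + (\<Sum>k=0..<m. (-1) ^ (Suc m - k) * int (fact (k + 1)) * int (m choose k))"
  using avoid_count_Suc[of m] fact_Suc_minus_alt_fact_sum[of m] by simp

theorem mainTheorem13:
  fixes a c :: "nat \<Rightarrow> nat"
  defines "a \<equiv> (\<lambda>n. bv_avoid_count n 3 id {1} {1, 3})"
      and "c \<equiv> non_derangements"
  shows "a 1 = 1 \<and> a 2 = 2
    \<and> (\<forall>n>2. a n = (n - 1) * a (n - 1) + (n - 2) * a (n - 2))
    \<and> (\<forall>n\<ge>1. int (a n) = int (fact (n - 1))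
            + (\<Sum>k=0..<n-1. (-1) ^ (n - k) * int (fact (k + 1)) * int ((n - 1) choose k)))
    \<and> (\<forall>n\<ge>1. real (a n) = real (c (n + 1)) / real n)
    \<and> (\<forall>n\<ge>1. a n = c n + c (n - 1))
    \<and> (\<forall>m. real (c m) = fact m * (1 - (\<Sum>k=0..m. (-1) ^ k / fact k)))
    \<and> c 0 = 0"
proof -
  have a_Suc: "a (Suc m) = c (Suc m) + c m" for m
    unfolding a_def c_def by (rule avoid_count_eq_non_derangements)
  have c_Suc_Suc: "c (Suc (Suc m)) = Suc m * a (Suc m)" for m
    unfolding a_Suc by (simp add: c_def non_derangements_Suc_Suc)
  have c0: "c 0 = 0" by (simp add: c_def non_derangements_def)
  have c1: "c 1 = 1" using non_derangements_eq[of 1] by (simp add: c_def alt_fact_sum_def)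
  have a1: "a 1 = 1" using a_Suc[of 0] c0 c1 by simp
  have a2: "a 2 = 2" using a_Suc[of 1] c_Suc_Suc[of 0] a1 c1 by (simp add: numeral_2_eq_2)
  have "a n = (n - 1) * a (n - 1) + (n - 2) * a (n - 2)" if "n > 2" for n
  proof -
    obtain k where n: "n = Suc (Suc (Suc k))" using \<open>n > 2\<close> by (metis add_2_eq_Suc less_iff_Suc_add)
    show ?thesis unfolding n a_Suc[of "Suc (Suc k)"] c_Suc_Suc by (simp add: a_Suc)
  qed
  moreover have "real (a n) = real (c (n + 1)) / real n" if "n \<ge> 1" for n
    using c_Suc_Suc[of "n - 1"] that by (simp add: field_simps)
  moreover have "int (a n) = int (fact (n - 1))
      + (\<Sum>k=0..<n-1. (-1) ^ (n - k) * int (fact (k + 1)) * int ((n - 1) choose k))" if "n \<ge> 1" for n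
    using avoid_count_formula[of "n - 1"] that by (simp add: a_def)
  moreover have "a n = c n + c (n - 1)" if "n \<ge> 1" for n
    using a_Suc[of "n - 1"] that by simp
  ultimately show ?thesis
    using a1 a2 c0 non_derangements_closed_form by (simp add: c_def)
qed

end
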